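(* Let $q\in\mathbb C$ with $|q|>1$, let $t$ be a prime number and $\zeta$ a primitive $t$-th root of unity. Let $\mathcal M$ be the field of meromorphic functions on $\mathbb C^*$, let $\kappa=\{g\in\mathcal M: g(qz)=g(z)\}$, and let $\kappa(z)\subseteq\mathcal M$ be the subfield generated by $\kappa$ and $z$. Let $\theta_q(z)=-\sum_{n\in\mathbb Z}(-1)^nq^{-n(n-1)/2}z^n$. If $\lambda_0\in\kappa(z)$ and $\lambda_{jd}\in\kappa(z)$ ($0\le j\le t-1$, $1\le d\le t-1$) satisfy $$\lambda_0+\sum_{d=1}^{t-1}\Bigl(\lambda_{0d}\,\theta_q(z)^d+\lambda_{1d}\,\theta_q(\zeta z)^d+\dots+\lambda_{t-1,d}\,\theta_q(\zeta^{t-1}z)^d\Bigr)=0,$$ then $\lambda_0=0$ and $\lambda_{jd}=0$ for all $j,d$.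
   Context: $\theta_q$ is a meromorphic (indeed holomorphic) function on $\mathbb C^*$ satisfying $\theta_q(qz)=-qz\,\theta_q(z)$. *)

theory Defs
  imports "HOL-Complex_Analysis.Complex_Analysis"
begin

text \<open>Elements of the field M of meromorphic functions on C* are represented by functions
  meromorphic on C* = -{0}; two representatives are identified when they agree outside a
  discrete (sparse) subset of C*.\<close>

definition mero_eq :: "(complex \<Rightarrow> complex) \<Rightarrow> (complex \<Rightarrow> complex) \<Rightarrow> bool" where
  "mero_eq f g \<longleftrightarrow> (\<forall>\<^sub>\<approx>z\<in>-{0}. f z = g z)"

definition Mero :: "(complex \<Rightarrow> complex) set" where
  "Mero = {f. f meromorphic_on (-{0})}"

definition kappa :: "complex \<Rightarrow> (complex \<Rightarrow> complex) set" where
  "kappa q = {g \<in> Mero. mero_eq (\<lambda>z. g (q * z)) g}"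

inductive_set kappa_z :: "complex \<Rightarrow> (complex \<Rightarrow> complex) set" for q :: complex where
  base: "g \<in> kappa q \<Longrightarrow> g \<in> kappa_z q"
| ident: "(\<lambda>z. z) \<in> kappa_z q"
| add: "f \<in> kappa_z q \<Longrightarrow> g \<in> kappa_z q \<Longrightarrow> (\<lambda>z. f z + g z) \<in> kappa_z q"
| mult: "f \<in> kappa_z q \<Longrightarrow> g \<in> kappa_z q \<Longrightarrow> (\<lambda>z. f z * g z) \<in> kappa_z q"
| uminus: "f \<in> kappa_z q \<Longrightarrow> (\<lambda>z. - f z) \<in> kappa_z q"
| inverse: "f \<in> kappa_z q \<Longrightarrow> (\<lambda>z. inverse (f z)) \<in> kappa_z q"
| eq: "f \<in> kappa_z q \<Longrightarrow> g \<in> Mero \<Longrightarrow> mero_eq f g \<Longrightarrow> g \<in> kappa_z q"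

definition theta :: "complex \<Rightarrow> complex \<Rightarrow> complex" where
  "theta q z = - (\<Sum>\<^sub>\<infinity>n::int. (-1) powi n * q powi (- (n * (n - 1) div 2)) * z powi n)"

end

theory Submission
  imports Defs "HOL-Computational_Algebra.Polynomial"
begin

text \<open>
  Call f a q-eigenfunction with multiplier (\<gamma>, e) if f(qz) = \<gamma> z^e f(z): the constant 1 is one with
  multiplier (1, 0), and \<theta>_q(\<zeta>^j z)^d one with multiplier ((-q\<zeta>^j)^d, d). Every element of \<kappa>(z) is,
  along the orbit q^n z of any z outside a countable set, eventually a rational function of q^n.
  Take a relation \<Sum> a_i f_i = 0 with coefficients in \<kappa>(z) and fewest nonzero coefficients.
  Combining the relation at qz with the relation at z eliminates one term a_i0 f_i0, so all
  coefficients of the new relation vanish; this says that h = a_i / a_i0 solves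
  h(qz) \<gamma>_i z^e_i = \<gamma>_i0 z^e_i0 h(z), and comparing degrees and leading coefficients of the rational
  functions representing h along an orbit gives e_i = e_i0 and \<gamma>_i0 / \<gamma>_i \<in> q^\<int>. Since t is prime,
  no two of the multipliers above are related in this way, so only a_i0 survives and then
  a_i0 f_i0 = 0, which is impossible as \<theta>_q does not vanish identically (Liouville's theorem
  applied to the two halves of its Laurent series).
  All exceptional sets are countable subsets of \<complex>*; for a meromorphic function, vanishing
  outside a countable set is equivalent to mero_eq by the identity theorem.
\<close>

lemma countable_if_cosparse:
  assumes "\<forall>\<^sub>\<approx>z\<in>-{0::complex}. P z"
  shows "countable {z. z \<noteq> 0 \<and> \<not> P z}"
proof -
  have "{z. \<not> P z} sparse_in -{0::complex}"
    using assms by (simp add: eventually_cosparse)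
  hence "countable (-{0} \<inter> {z. \<not> P z})"
    by (intro sparse_imp_countable) auto
  thus ?thesis
    by (simp add: Collect_conj_eq Compl_eq)
qed

lemma mero_eq_imp_countable: "mero_eq f g \<Longrightarrow> countable {z. z \<noteq> 0 \<and> f z \<noteq> g z}"
  unfolding mero_eq_def by (drule countable_if_cosparse) simp

lemma ex_nonzero_not_in_countable:
  assumes "countable (X :: complex set)"
  obtains z where "z \<noteq> 0" "z \<notin> X"
proof -
  have "insert 0 X \<noteq> UNIV"
    using assms uncountable_UNIV_complex by (metis countable_insert)
  thus ?thesis
    using that by blast
qed

lemma ex_nonzero_orbit_avoiding:
  fixes q :: complex
  assumes "q \<noteq> 0" "countable X"
  obtains z where "z \<noteq> 0" "\<And>n. q ^ n * z \<notin> X"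
proof -
  have "countable (\<Union>n. (\<lambda>x. x / q ^ n) ` X)"
    using assms(2) by auto
  then obtain z where z: "z \<noteq> 0" "z \<notin> (\<Union>n. (\<lambda>x. x / q ^ n) ` X)"
    by (rule ex_nonzero_not_in_countable)
  have "q ^ n * z \<notin> X" for n
  proof
    assume "q ^ n * z \<in> X"
    hence "(q ^ n * z) / q ^ n \<in> (\<Union>n. (\<lambda>x. x / q ^ n) ` X)"
      by blast
    with z(2) assms(1) show False
      by simp
  qed
  with z(1) show ?thesis
    using that by blast
qed

lemma countable_dilated:
  fixes q :: complex
  assumes "q \<noteq> 0" "countable {z. z \<noteq> 0 \<and> P z}"
  shows "countable {z. z \<noteq> 0 \<and> P (q * z)}"
proof (rule countable_subset)
  show "{z. z \<noteq> 0 \<and> P (q * z)} \<subseteq> (\<lambda>x. x / q) ` {z. z \<noteq> 0 \<and> P z}"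
  proof
    fix z assume "z \<in> {z. z \<noteq> 0 \<and> P (q * z)}"
    with assms(1) show "z \<in> (\<lambda>x. x / q) ` {z. z \<noteq> 0 \<and> P z}"
      by (intro image_eqI[of _ _ "q * z"]) auto
  qed
qed (use assms(2) in simp)

lemma Mero_dilate:
  assumes "f \<in> Mero" "q \<noteq> 0"
  shows "(\<lambda>z. f (q * z)) \<in> Mero"
proof -
  have "(\<lambda>z. f (q * z)) meromorphic_on -{0}"
    by (rule meromorphic_on_compose[of f "-{0}"])
       (use assms in \<open>auto simp: Mero_def intro!: analytic_intros\<close>)
  thus ?thesis
    by (simp add: Mero_def)
qed

lemma countable_zeros_if_not_mero_eq_0:
  assumes "f \<in> Mero" "\<not> mero_eq f (\<lambda>z. 0)"
  shows "countable {z. z \<noteq> 0 \<and> f z = 0}"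
proof -
  have "(\<forall>\<^sub>\<approx>z\<in>-{0}. f z = 0) \<or> (\<forall>\<^sub>\<approx>z\<in>-{0}. f z \<noteq> 0)"
    using assms(1) unfolding Mero_def
    by (intro meromorphic_imp_constant_or_avoid connected_punctured_universe) auto
  with assms(2) have "\<forall>\<^sub>\<approx>z\<in>-{0}. f z \<noteq> 0"
    by (auto simp: mero_eq_def)
  from countable_if_cosparse[OF this] show ?thesis
    by simp
qed

lemma mero_eq_0_iff_countable:
  assumes "f \<in> Mero"
  shows "mero_eq f (\<lambda>z. 0) \<longleftrightarrow> countable {z. z \<noteq> 0 \<and> f z \<noteq> 0}"
proof
  assume "countable {z. z \<noteq> 0 \<and> f z \<noteq> 0}"
  show "mero_eq f (\<lambda>z. 0)"
  proof (rule ccontr)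
    assume "\<not> mero_eq f (\<lambda>z. 0)"
    with assms \<open>countable {z. z \<noteq> 0 \<and> f z \<noteq> 0}\<close>
    have "countable ({z. z \<noteq> 0 \<and> f z \<noteq> 0} \<union> {z. z \<noteq> 0 \<and> f z = 0})"
      using countable_zeros_if_not_mero_eq_0 by blast
    then obtain z where "z \<noteq> 0" "z \<notin> {z. z \<noteq> 0 \<and> f z \<noteq> 0} \<union> {z. z \<noteq> 0 \<and> f z = 0}"
      by (rule ex_nonzero_not_in_countable)
    thus False
      by blast
  qed
qed (use mero_eq_imp_countable in fastforce)

definition rational_on_orbit :: "complex \<Rightarrow> (complex \<Rightarrow> complex) \<Rightarrow> complex \<Rightarrow> bool" where
  "rational_on_orbit q f z \<longleftrightarrow>
     (\<exists>p r. r \<noteq> 0 \<and> (\<forall>\<^sub>F n in sequentially. f (q ^ n * z) = poly p (q ^ n) / poly r (q ^ n)))"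

definition rational_on_orbits :: "complex \<Rightarrow> (complex \<Rightarrow> complex) \<Rightarrow> bool" where
  "rational_on_orbits q f \<longleftrightarrow>
     (\<exists>X. countable X \<and> (\<forall>z. z \<noteq> 0 \<longrightarrow> (\<forall>n. q ^ n * z \<notin> X) \<longrightarrow> rational_on_orbit q f z))"

lemma rational_on_orbitI:
  "r \<noteq> 0 \<Longrightarrow> (\<forall>\<^sub>F n in sequentially. f (q ^ n * z) = poly p (q ^ n) / poly r (q ^ n))
    \<Longrightarrow> rational_on_orbit q f z"
  unfolding rational_on_orbit_def by blast

lemma rational_on_orbitE:
  assumes "rational_on_orbit q f z"
  obtains p r where "r \<noteq> 0" "\<forall>\<^sub>F n in sequentially. f (q ^ n * z) = poly p (q ^ n) / poly r (q ^ n)"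
proof -
  from assms obtain p r where "r \<noteq> 0"
    "\<forall>\<^sub>F n in sequentially. f (q ^ n * z) = poly p (q ^ n) / poly r (q ^ n)"
    unfolding rational_on_orbit_def by blast
  thus ?thesis
    by (rule that)
qed

lemma rational_on_orbitsI:
  "countable X \<Longrightarrow> (\<And>z. z \<noteq> 0 \<Longrightarrow> (\<And>n. q ^ n * z \<notin> X) \<Longrightarrow> rational_on_orbit q f z)
    \<Longrightarrow> rational_on_orbits q f"
  unfolding rational_on_orbits_def by blast

lemma rational_on_orbitsE:
  assumes "rational_on_orbits q f"
  obtains X where "countable X" "\<And>z. z \<noteq> 0 \<Longrightarrow> (\<And>n. q ^ n * z \<notin> X) \<Longrightarrow> rational_on_orbit q f z"
proof -
  from assms obtain X where "countable X"
    "\<forall>z. z \<noteq> 0 \<longrightarrow> (\<forall>n. q ^ n * z \<notin> X) \<longrightarrow> rational_on_orbit q f z"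
    unfolding rational_on_orbits_def by blast
  thus ?thesis
    by (intro that) auto
qed

lemma inj_powers_of_norm_gt_1:
  assumes "norm (q :: complex) > 1"
  shows "inj (\<lambda>n::nat. q ^ n)"
proof (rule injI)
  fix m n :: nat
  assume "q ^ m = q ^ n"
  hence "norm q ^ m = norm q ^ n"
    by (metis norm_power)
  thus "m = n"
    using assms by (simp add: power_inject_exp)
qed

lemma eventually_poly_powers_nonzero:
  assumes "norm (q :: complex) > 1" "r \<noteq> 0"
  shows "\<forall>\<^sub>F n in sequentially. poly r (q ^ n) \<noteq> 0"
proof -
  have "finite ((\<lambda>n. q ^ n) -` {x. poly r x = 0})"
    using poly_roots_finite[OF assms(2)] inj_powers_of_norm_gt_1[OF assms(1)]
    by (rule finite_vimageI)
  thus ?thesis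
    by (simp add: vimage_def eventually_cofinite cofinite_eq_sequentially[symmetric])
qed

lemma poly_eq_if_eventually_eq_on_powers:
  assumes "norm (q :: complex) > 1" "\<forall>\<^sub>F n in sequentially. poly p (q ^ n) = poly r (q ^ n)"
  shows "p = r"
proof (rule ccontr)
  assume "p \<noteq> r"
  hence "p - r \<noteq> 0"
    by simp
  from eventually_poly_powers_nonzero[OF assms(1) this] assms(2)
  have "\<forall>\<^sub>F n in sequentially. False"
    by eventually_elim simp
  thus False
    by simp
qed

lemma rational_on_orbit_monomial: "rational_on_orbit q (\<lambda>z. c * z ^ k) z"
  by (rule rational_on_orbitI[where r = 1 and p = "monom (c * z ^ k) k"])
     (auto simp: poly_monom power_mult_distrib mult_ac)

lemma rational_on_orbit_add:
  assumes "norm q > 1" "rational_on_orbit q f z" "rational_on_orbit q g z"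
  shows "rational_on_orbit q (\<lambda>z. f z + g z) z"
proof -
  obtain p1 r1 where 1: "r1 \<noteq> 0" "\<forall>\<^sub>F n in sequentially. f (q ^ n * z) = poly p1 (q ^ n) / poly r1 (q ^ n)"
    using assms(2) by (rule rational_on_orbitE)
  obtain p2 r2 where 2: "r2 \<noteq> 0" "\<forall>\<^sub>F n in sequentially. g (q ^ n * z) = poly p2 (q ^ n) / poly r2 (q ^ n)"
    using assms(3) by (rule rational_on_orbitE)
  have "\<forall>\<^sub>F n in sequentially.
          f (q ^ n * z) + g (q ^ n * z) = poly (p1 * r2 + p2 * r1) (q ^ n) / poly (r1 * r2) (q ^ n)"
    using 1(2) 2(2) eventually_poly_powers_nonzero[OF assms(1) 1(1)]
      eventually_poly_powers_nonzero[OF assms(1) 2(1)]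
    by eventually_elim (simp add: field_simps)
  thus ?thesis
    by (rule rational_on_orbitI[rotated]) (use 1(1) 2(1) in simp)
qed

lemma rational_on_orbit_mult:
  assumes "rational_on_orbit q f z" "rational_on_orbit q g z"
  shows "rational_on_orbit q (\<lambda>z. f z * g z) z"
proof -
  obtain p1 r1 where 1: "r1 \<noteq> 0" "\<forall>\<^sub>F n in sequentially. f (q ^ n * z) = poly p1 (q ^ n) / poly r1 (q ^ n)"
    using assms(1) by (rule rational_on_orbitE)
  obtain p2 r2 where 2: "r2 \<noteq> 0" "\<forall>\<^sub>F n in sequentially. g (q ^ n * z) = poly p2 (q ^ n) / poly r2 (q ^ n)"
    using assms(2) by (rule rational_on_orbitE)
  have "\<forall>\<^sub>F n in sequentially.
          f (q ^ n * z) * g (q ^ n * z) = poly (p1 * p2) (q ^ n) / poly (r1 * r2) (q ^ n)"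
    using 1(2) 2(2) by eventually_elim simp
  thus ?thesis
    by (rule rational_on_orbitI[rotated]) (use 1(1) 2(1) in simp)
qed

lemma rational_on_orbit_inverse:
  assumes "rational_on_orbit q f z"
  shows "rational_on_orbit q (\<lambda>z. inverse (f z)) z"
proof -
  obtain p r where pr: "r \<noteq> 0" "\<forall>\<^sub>F n in sequentially. f (q ^ n * z) = poly p (q ^ n) / poly r (q ^ n)"
    using assms by (rule rational_on_orbitE)
  show ?thesis
  proof (cases "p = 0")
    case True
    from pr(2) have "\<forall>\<^sub>F n in sequentially. inverse (f (q ^ n * z)) = poly 0 (q ^ n) / poly 1 (q ^ n)"
      by eventually_elim (simp add: True)
    thus ?thesis
      by (rule rational_on_orbitI[rotated]) simp
  next
    case False
    from pr(2) have "\<forall>\<^sub>F n in sequentially. inverse (f (q ^ n * z)) = poly r (q ^ n) / poly p (q ^ n)"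
      by eventually_elim simp
    thus ?thesis
      by (rule rational_on_orbitI[rotated]) (rule False)
  qed
qed

lemma rational_on_orbit_dilate:
  assumes "q \<noteq> 0" "rational_on_orbit q f z"
  shows "rational_on_orbit q (\<lambda>z. f (q * z)) z"
proof -
  obtain p r where pr: "r \<noteq> 0" "\<forall>\<^sub>F n in sequentially. f (q ^ n * z) = poly p (q ^ n) / poly r (q ^ n)"
    using assms(2) by (rule rational_on_orbitE)
  from pr(2) have "\<forall>\<^sub>F n in sequentially. f (q ^ Suc n * z) = poly p (q ^ Suc n) / poly r (q ^ Suc n)"
    by (rule eventually_sequentially_Suc[THEN iffD2])
  hence "\<forall>\<^sub>F n in sequentially.
           f (q * (q ^ n * z)) = poly (p \<circ>\<^sub>p [:0, q:]) (q ^ n) / poly (r \<circ>\<^sub>p [:0, q:]) (q ^ n)"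
    by eventually_elim (simp add: poly_pcompose mult_ac)
  moreover have "r \<circ>\<^sub>p [:0, q:] \<noteq> 0"
    using pr(1) assms(1) by (subst pcompose_eq_0_iff) auto
  ultimately show ?thesis
    by (intro rational_on_orbitI[where p = "p \<circ>\<^sub>p [:0, q:]"])
qed

lemma rational_on_orbits_lift2:
  assumes "rational_on_orbits q f" "rational_on_orbits q g"
    and "\<And>z. rational_on_orbit q f z \<Longrightarrow> rational_on_orbit q g z \<Longrightarrow> rational_on_orbit q h z"
  shows "rational_on_orbits q h"
proof -
  obtain X where X: "countable X" "\<And>z. z \<noteq> 0 \<Longrightarrow> (\<And>n. q ^ n * z \<notin> X) \<Longrightarrow> rational_on_orbit q f z"
    using assms(1) by (rule rational_on_orbitsE) blast
  obtain Y where Y: "countable Y" "\<And>z. z \<noteq> 0 \<Longrightarrow> (\<And>n. q ^ n * z \<notin> Y) \<Longrightarrow> rational_on_orbit q g z"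
    using assms(2) by (rule rational_on_orbitsE) blast
  show ?thesis
    by (rule rational_on_orbitsI[of "X \<union> Y"]) (use X Y assms(3) in auto)
qed

lemma rational_on_orbits_add:
  "norm q > 1 \<Longrightarrow> rational_on_orbits q f \<Longrightarrow> rational_on_orbits q g
    \<Longrightarrow> rational_on_orbits q (\<lambda>z. f z + g z)"
  by (rule rational_on_orbits_lift2[of q f g]) (auto intro: rational_on_orbit_add)

lemma rational_on_orbits_mult:
  "rational_on_orbits q f \<Longrightarrow> rational_on_orbits q g \<Longrightarrow> rational_on_orbits q (\<lambda>z. f z * g z)"
  by (rule rational_on_orbits_lift2[of q f g]) (auto intro: rational_on_orbit_mult)

lemma rational_on_orbits_inverse:
  "rational_on_orbits q f \<Longrightarrow> rational_on_orbits q (\<lambda>z. inverse (f z))"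
  by (rule rational_on_orbits_lift2[of q f f]) (auto intro: rational_on_orbit_inverse)

lemma rational_on_orbits_dilate:
  "q \<noteq> 0 \<Longrightarrow> rational_on_orbits q f \<Longrightarrow> rational_on_orbits q (\<lambda>z. f (q * z))"
  by (rule rational_on_orbits_lift2[of q f f]) (auto intro: rational_on_orbit_dilate)

lemma rational_on_orbits_monomial: "rational_on_orbits q (\<lambda>z. c * z ^ k)"
  by (rule rational_on_orbitsI[of "{}"]) (auto intro: rational_on_orbit_monomial)

lemma rational_on_orbits_uminus:
  assumes "rational_on_orbits q f"
  shows "rational_on_orbits q (\<lambda>z. - f z)"
proof -
  have "rational_on_orbits q (\<lambda>z. (- 1) * z ^ 0 * f z)"
    using assms by (intro rational_on_orbits_mult rational_on_orbits_monomial)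
  thus ?thesis
    by simp
qed

lemma rational_on_orbits_diff:
  "norm q > 1 \<Longrightarrow> rational_on_orbits q f \<Longrightarrow> rational_on_orbits q g
    \<Longrightarrow> rational_on_orbits q (\<lambda>z. f z - g z)"
  using rational_on_orbits_add[of q f "\<lambda>z. - g z"] rational_on_orbits_uminus[of q g] by simp

lemma rational_on_orbits_cong:
  assumes "q \<noteq> 0" "rational_on_orbits q f" "countable {z. z \<noteq> 0 \<and> f z \<noteq> g z}"
  shows "rational_on_orbits q g"
proof -
  obtain X where X: "countable X" "\<And>z. z \<noteq> 0 \<Longrightarrow> (\<And>n. q ^ n * z \<notin> X) \<Longrightarrow> rational_on_orbit q f z"
    using assms(2) by (rule rational_on_orbitsE) blast
  show ?thesis
  proof (rule rational_on_orbitsI[of "X \<union> {z. z \<noteq> 0 \<and> f z \<noteq> g z}"])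
    fix z assume z: "z \<noteq> 0" "\<And>n. q ^ n * z \<notin> X \<union> {z. z \<noteq> 0 \<and> f z \<noteq> g z}"
    have "f (q ^ n * z) = g (q ^ n * z)" for n
      using z(1) z(2)[of n] assms(1) by auto
    with X(2)[of z] z show "rational_on_orbit q g z"
      unfolding rational_on_orbit_def by auto
  qed (use X(1) assms(3) in simp)
qed

lemma rational_on_orbits_kappa:
  assumes "q \<noteq> 0" "g \<in> kappa q"
  shows "rational_on_orbits q g"
proof (rule rational_on_orbitsI)
  show "countable {z. z \<noteq> 0 \<and> g (q * z) \<noteq> g z}"
    using assms(2) unfolding kappa_def by (auto dest: mero_eq_imp_countable)
  fix z assume z: "z \<noteq> 0" "\<And>n. q ^ n * z \<notin> {z. z \<noteq> 0 \<and> g (q * z) \<noteq> g z}"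
  have "g (q ^ n * z) = g z" for n
  proof (induction n)
    case (Suc n)
    have "g (q * (q ^ n * z)) = g (q ^ n * z)"
      using z(1) z(2)[of n] assms(1) by simp
    with Suc show ?case
      by (simp add: mult.assoc)
  qed simp
  thus "rational_on_orbit q g z"
    by (intro rational_on_orbitI[where r = 1 and p = "[:g z:]"]) auto
qed

lemma kappa_z_imp_Mero_rational_on_orbits:
  assumes q: "norm q > 1" and "f \<in> kappa_z q"
  shows "f \<in> Mero \<and> rational_on_orbits q f"
proof -
  have "q \<noteq> 0"
    using q by auto
  with assms(2) show ?thesis
  proof (induction rule: kappa_z.induct)
    case (base g)
    thus ?case
      using rational_on_orbits_kappa[of q g] by (auto simp: kappa_def)

  next
    case ident
    thus ?case
      using rational_on_orbits_monomial[of q 1 1] by (auto simp: Mero_def)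
  next
    case (eq f g)
    thus ?case
      using rational_on_orbits_cong[of q f g] by (auto dest: mero_eq_imp_countable)
  qed (auto simp: Mero_def intro!: meromorphic_intros rational_on_orbits_add q
                  rational_on_orbits_mult rational_on_orbits_uminus rational_on_orbits_inverse)
qed

lemma q_difference_poly_rigid:
  fixes p r :: "complex poly"
  assumes "q \<noteq> 0" "c \<noteq> 0" "p \<noteq> 0" "r \<noteq> 0"
    and eq: "smult c (monom 1 d * (p \<circ>\<^sub>p [:0, q:]) * r) = smult c' (monom 1 d' * p * (r \<circ>\<^sub>p [:0, q:]))"
  shows "d = d' \<and> c' = c * q powi (int (degree p) - int (degree r))"
proof -
  have dilated: "s \<circ>\<^sub>p [:0, q:] \<noteq> 0" "degree (s \<circ>\<^sub>p [:0, q:]) = degree s"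
    "lead_coeff (s \<circ>\<^sub>p [:0, q:]) = lead_coeff s * q ^ degree s" if "s \<noteq> 0" for s :: "complex poly"
    using assms(1) that lead_coeff_comp[of "[:0, q:]" s]
    by (simp_all add: pcompose_eq_0_iff degree_pcompose)
  have "smult c' (monom 1 d' * p * (r \<circ>\<^sub>p [:0, q:])) \<noteq> 0"
    unfolding eq[symmetric] using assms(2-4) dilated by simp
  hence "c' \<noteq> 0"
    by auto
  have "d + degree p + degree r = d' + degree p + degree r"
    using arg_cong[OF eq, of degree] assms(2-4) \<open>c' \<noteq> 0\<close> dilated
    by (simp add: degree_mult_eq degree_monom_eq)
  moreover have "c * (lead_coeff p * q ^ degree p) * lead_coeff r = c' * lead_coeff p * (lead_coeff r * q ^ degree r)"
    using arg_cong[OF eq, of lead_coeff] assms(3,4) dilated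
    unfolding lead_coeff_smult lead_coeff_mult by (simp add: degree_monom_eq)
  hence "c' = c * q ^ degree p / q ^ degree r"
    using assms(1,3,4) by (simp add: field_simps)
  ultimately show ?thesis
    using assms(1) by (simp add: power_int_diff)
qed

lemma q_difference_on_orbit_imp_poly_eq:
  fixes q z :: complex
  assumes q: "norm q > 1" and "r \<noteq> 0"
    and h: "\<forall>\<^sub>F n in sequentially. h (q ^ n * z) = poly p (q ^ n) / poly r (q ^ n)"
    and rel: "\<And>n. h (q * (q ^ n * z)) * (g * (q ^ n * z) ^ d) = g' * (q ^ n * z) ^ d' * h (q ^ n * z)"
  shows "smult (g * z ^ d) (monom 1 d * (p \<circ>\<^sub>p [:0, q:]) * r) = smult (g' * z ^ d') (monom 1 d' * p * (r \<circ>\<^sub>p [:0, q:]))"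
proof (rule poly_eq_if_eventually_eq_on_powers[OF q])
  note r_nonzero = eventually_poly_powers_nonzero[OF q \<open>r \<noteq> 0\<close>]
  show "\<forall>\<^sub>F n in sequentially.
          poly (smult (g * z ^ d) (monom 1 d * (p \<circ>\<^sub>p [:0, q:]) * r)) (q ^ n) =
          poly (smult (g' * z ^ d') (monom 1 d' * p * (r \<circ>\<^sub>p [:0, q:]))) (q ^ n)"
    using h eventually_sequentially_Suc[THEN iffD2, OF h]
      r_nonzero eventually_sequentially_Suc[THEN iffD2, OF r_nonzero]
  proof eventually_elim
    case (elim n)
    define x where "x = q ^ n"
    have "poly p (q * x) / poly r (q * x) * (g * (x * z) ^ d) = g' * (x * z) ^ d' * (poly p x / poly r x)"
      using rel[of n] elim by (simp add: x_def mult.assoc)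
    with elim show ?case
      unfolding x_def[symmetric]
      by (simp add: x_def poly_pcompose poly_monom power_mult_distrib field_simps)
  qed
qed

lemma rational_on_orbits_q_difference_solution:
  assumes q: "norm q > 1" and h: "h \<in> Mero" "rational_on_orbits q h" "\<not> mero_eq h (\<lambda>z. 0)"
    and "g \<noteq> 0"
    and rel: "countable {z. z \<noteq> 0 \<and> h (q * z) * (g * z ^ d) \<noteq> g' * z ^ d' * h z}"
  shows "d = d' \<and> (\<exists>k::int. g' = g * q powi k)"
proof -
  have "q \<noteq> 0"
    using q by auto
  obtain X where X: "countable X" "\<And>z. z \<noteq> 0 \<Longrightarrow> (\<And>n. q ^ n * z \<notin> X) \<Longrightarrow> rational_on_orbit q h z"
    using h(2) by (rule rational_on_orbitsE) blast
  define S where "S = {z. z \<noteq> 0 \<and> h z = 0} \<union> {z. z \<noteq> 0 \<and> h (q * z) * (g * z ^ d) \<noteq> g' * z ^ d' * h z}"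
  have "countable (X \<union> S)"
    using X(1) rel countable_zeros_if_not_mero_eq_0[OF h(1,3)] by (simp add: S_def)
  then obtain z where z: "z \<noteq> 0" "\<And>n. q ^ n * z \<notin> X \<union> S"
    using \<open>q \<noteq> 0\<close> ex_nonzero_orbit_avoiding by metis
  have orbit: "h (q ^ n * z) \<noteq> 0"
    "h (q * (q ^ n * z)) * (g * (q ^ n * z) ^ d) = g' * (q ^ n * z) ^ d' * h (q ^ n * z)" for n
    using z(1) z(2)[of n] \<open>q \<noteq> 0\<close> by (auto simp: S_def)
  have "rational_on_orbit q h z"
    using X(2)[OF z(1)] z(2) by blast
  then obtain p r where pr: "r \<noteq> 0" "\<forall>\<^sub>F n in sequentially. h (q ^ n * z) = poly p (q ^ n) / poly r (q ^ n)"
    by (rule rational_on_orbitE)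
  have "p \<noteq> 0"
  proof
    assume "p = 0"
    with pr(2) orbit(1) have "\<forall>\<^sub>F n in sequentially. False"
      by (auto elim: eventually_mono)
    thus False
      by simp
  qed
  from q_difference_poly_rigid[OF \<open>q \<noteq> 0\<close> _ \<open>p \<noteq> 0\<close> pr(1) q_difference_on_orbit_imp_poly_eq[OF q pr orbit(2)]]
  have "d = d'" "g' * z ^ d = g * z ^ d * q powi (int (degree p) - int (degree r))"
    using \<open>g \<noteq> 0\<close> z(1) by auto
  thus ?thesis
    using z(1) by auto
qed

lemma rational_on_orbits_q_difference_pair:
  assumes q: "norm q > 1"
    and a: "a \<in> Mero" "rational_on_orbits q a" "\<not> mero_eq a (\<lambda>z. 0)"
    and b: "b \<in> Mero" "rational_on_orbits q b" "\<not> mero_eq b (\<lambda>z. 0)"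
    and "g \<noteq> 0"
    and rel: "countable {z. z \<noteq> 0 \<and> a (q * z) * (g * z ^ d) * b z \<noteq> g' * z ^ d' * b (q * z) * a z}"
  shows "d = d' \<and> (\<exists>k::int. g' = g * q powi k)"
proof (rule rational_on_orbits_q_difference_solution[OF q _ _ _ \<open>g \<noteq> 0\<close>])
  have "q \<noteq> 0"
    using q by auto
  have zeros: "countable {z. z \<noteq> 0 \<and> b z = 0}" "countable {z. z \<noteq> 0 \<and> b (q * z) = 0}"
    using countable_zeros_if_not_mero_eq_0[OF b(1,3)] countable_dilated[OF \<open>q \<noteq> 0\<close>] by auto
  show "(\<lambda>z. a z / b z) \<in> Mero"
    using a(1) b(1) by (auto simp: Mero_def intro!: meromorphic_intros)
  show "rational_on_orbits q (\<lambda>z. a z / b z)"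
    using a(2) b(2) by (simp add: divide_inverse rational_on_orbits_mult rational_on_orbits_inverse)
  show "\<not> mero_eq (\<lambda>z. a z / b z) (\<lambda>z. 0)"
  proof
    assume "mero_eq (\<lambda>z. a z / b z) (\<lambda>z. 0)"
    hence "countable ({z. z \<noteq> 0 \<and> a z / b z \<noteq> 0} \<union> {z. z \<noteq> 0 \<and> b z = 0})"
      using mero_eq_imp_countable zeros(1) by fastforce
    hence "countable {z. z \<noteq> 0 \<and> a z \<noteq> 0}"
      by (rule countable_subset[rotated]) auto
    with a(1,3) show False
      by (simp add: mero_eq_0_iff_countable)
  qed
  have "countable ({z. z \<noteq> 0 \<and> a (q * z) * (g * z ^ d) * b z \<noteq> g' * z ^ d' * b (q * z) * a z} \<union>
                   {z. z \<noteq> 0 \<and> b z = 0} \<union> {z. z \<noteq> 0 \<and> b (q * z) = 0})"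
    using rel zeros by simp
  thus "countable {z. z \<noteq> 0 \<and> a (q * z) / b (q * z) * (g * z ^ d) \<noteq> g' * z ^ d' * (a z / b z)}"
    by (rule countable_subset[rotated]) (auto simp: field_simps)
qed

lemma countable_nonzero_q_combination:
  fixes q :: complex and a u v :: "complex \<Rightarrow> complex"
  assumes "q \<noteq> 0" "countable {z. z \<noteq> 0 \<and> a z \<noteq> 0}"
  shows "countable {z. z \<noteq> 0 \<and> a (q * z) * u z - v z * a z \<noteq> 0}"
proof -
  have "countable {z. z \<noteq> 0 \<and> a (q * z) \<noteq> 0}"
    by (rule countable_dilated[OF assms])
  with assms(2) have "countable ({z. z \<noteq> 0 \<and> a z \<noteq> 0} \<union> {z. z \<noteq> 0 \<and> a (q * z) \<noteq> 0})"
    by simp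
  thus ?thesis
    by (rule countable_subset[rotated]) auto
qed

lemma countable_eliminated_relation:
  fixes a f :: "'i \<Rightarrow> complex \<Rightarrow> complex"
  assumes "q \<noteq> 0"
    and f_eq: "\<forall>i\<in>I. \<forall>z. z \<noteq> 0 \<longrightarrow> f i (q * z) = \<gamma> i * z ^ e i * f i z"
    and rel: "countable {z. z \<noteq> 0 \<and> (\<Sum>i\<in>I. a i z * f i z) \<noteq> 0}"
  shows "countable {z. z \<noteq> 0 \<and> (\<Sum>i\<in>I. (a i (q * z) * (\<gamma> i * z ^ e i) * u z - v z * a i z) * f i z) \<noteq> 0}"
proof -
  have combination: "(\<Sum>i\<in>I. (a i (q * z) * (\<gamma> i * z ^ e i) * u z - v z * a i z) * f i z)
      = u z * (\<Sum>i\<in>I. a i (q * z) * f i (q * z)) - v z * (\<Sum>i\<in>I. a i z * f i z)" if "z \<noteq> 0" for z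
  proof -
    have "(\<Sum>i\<in>I. (a i (q * z) * (\<gamma> i * z ^ e i) * u z - v z * a i z) * f i z)
        = (\<Sum>i\<in>I. u z * (a i (q * z) * f i (q * z)) - v z * (a i z * f i z))"
    proof (rule sum.cong)
      fix i assume "i \<in> I"
      with f_eq that have "f i (q * z) = \<gamma> i * z ^ e i * f i z"
        by blast
      thus "(a i (q * z) * (\<gamma> i * z ^ e i) * u z - v z * a i z) * f i z
          = u z * (a i (q * z) * f i (q * z)) - v z * (a i z * f i z)"
        by (simp add: algebra_simps)
    qed simp
    thus ?thesis
      by (simp add: sum_subtractf sum_distrib_left)
  qed
  have "countable {z. z \<noteq> 0 \<and> (\<Sum>i\<in>I. a i (q * z) * f i (q * z)) \<noteq> 0}"
    by (rule countable_dilated[OF assms(1) rel])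
  with rel have "countable ({z. z \<noteq> 0 \<and> (\<Sum>i\<in>I. a i (q * z) * f i (q * z)) \<noteq> 0} \<union>
                            {z. z \<noteq> 0 \<and> (\<Sum>i\<in>I. a i z * f i z) \<noteq> 0})"
    by simp
  thus ?thesis
    by (rule countable_subset[rotated]) (auto simp: combination)
qed

lemma q_combination_Mero_rational_on_orbits:
  fixes a c :: "complex \<Rightarrow> complex" and g g' :: complex and k k' :: nat
  assumes q: "norm q > 1" and a: "a \<in> Mero" "rational_on_orbits q a" and c: "c \<in> Mero" "rational_on_orbits q c"
  defines "b \<equiv> \<lambda>z. a (q * z) * (g * z ^ k) * c z - g' * z ^ k' * c (q * z) * a z"
  shows "b \<in> Mero \<and> rational_on_orbits q b"
proof
  have "q \<noteq> 0"
    using q by auto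
  have "(\<lambda>z. a (q * z)) \<in> Mero" "(\<lambda>z. c (q * z)) \<in> Mero"
    using a(1) c(1) Mero_dilate[OF _ \<open>q \<noteq> 0\<close>] by auto
  with a(1) c(1) show "b \<in> Mero"
    unfolding b_def by (auto simp: Mero_def intro!: meromorphic_intros)
  note factors = rational_on_orbits_dilate[OF \<open>q \<noteq> 0\<close> a(2)] rational_on_orbits_dilate[OF \<open>q \<noteq> 0\<close> c(2)]
    rational_on_orbits_monomial a(2) c(2)
  show "rational_on_orbits q b"
    unfolding b_def
    by (rule rational_on_orbits_diff[OF q]; rule rational_on_orbits_mult;
        (rule rational_on_orbits_mult)?; rule factors)
qed

lemma countable_if_other_coefficients_vanish:
  assumes "finite I" "i0 \<in> I" "a i0 \<in> Mero" "\<not> mero_eq (a i0) (\<lambda>z. 0)"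
    and "\<forall>i\<in>I - {i0}. mero_eq (a i) (\<lambda>z. 0)"
    and "countable {z. z \<noteq> 0 \<and> (\<Sum>i\<in>I. a i z * f i z) \<noteq> 0}"
  shows "countable {z. z \<noteq> 0 \<and> f i0 z \<noteq> 0}"
proof -
  let ?others = "\<Union>i\<in>I - {i0}. {z. z \<noteq> 0 \<and> a i z \<noteq> 0}"
  have "countable ?others"
    using assms(1,5) mero_eq_imp_countable by (intro countable_UN) (auto intro: countable_finite)
  with assms(6) countable_zeros_if_not_mero_eq_0[OF assms(3,4)]
  have "countable ({z. z \<noteq> 0 \<and> (\<Sum>i\<in>I. a i z * f i z) \<noteq> 0} \<union> ?others \<union> {z. z \<noteq> 0 \<and> a i0 z = 0})"
    by simp
  moreover have "(\<Sum>i\<in>I. a i z * f i z) = a i0 z * f i0 z + (\<Sum>i\<in>I - {i0}. a i z * f i z)" for z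
    by (rule sum.remove[OF assms(1,2)])
  hence "{z. z \<noteq> 0 \<and> f i0 z \<noteq> 0} \<subseteq>
           {z. z \<noteq> 0 \<and> (\<Sum>i\<in>I. a i z * f i z) \<noteq> 0} \<union> ?others \<union> {z. z \<noteq> 0 \<and> a i0 z = 0}"
    by (auto intro!: sum.neutral)
  ultimately show ?thesis
    by (rule countable_subset[rotated])
qed

lemma q_eigenfunctions_independent:
  fixes a f :: "'i \<Rightarrow> complex \<Rightarrow> complex" and \<gamma> :: "'i \<Rightarrow> complex" and e :: "'i \<Rightarrow> nat"
  assumes q: "norm q > 1" and I: "finite I"
    and \<gamma>: "\<forall>i\<in>I. \<gamma> i \<noteq> 0"
    and f_eq: "\<forall>i\<in>I. \<forall>z. z \<noteq> 0 \<longrightarrow> f i (q * z) = \<gamma> i * z ^ e i * f i z"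
    and f_nonzero: "\<forall>i\<in>I. \<not> countable {z. z \<noteq> 0 \<and> f i z \<noteq> 0}"
    and distinct: "\<forall>i\<in>I. \<forall>i'\<in>I. i \<noteq> i' \<longrightarrow> e i = e i' \<longrightarrow> (\<forall>k::int. \<gamma> i' \<noteq> \<gamma> i * q powi k)"
    and a: "\<forall>i\<in>I. a i \<in> Mero \<and> rational_on_orbits q (a i)"
    and rel: "countable {z. z \<noteq> 0 \<and> (\<Sum>i\<in>I. a i z * f i z) \<noteq> 0}"
  shows "\<forall>i\<in>I. mero_eq (a i) (\<lambda>z. 0)"
proof -
  have "q \<noteq> 0"
    using q by auto
  define n where "n = card {i\<in>I. \<not> mero_eq (a i) (\<lambda>z. 0)}"
  from n_def a rel show ?thesis
  proof (induction n arbitrary: a rule: less_induct)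
    case (less n a)
    show ?case
    proof (rule ccontr)
      assume "\<not> (\<forall>i\<in>I. mero_eq (a i) (\<lambda>z. 0))"
      then obtain i0 where i0: "i0 \<in> I" "\<not> mero_eq (a i0) (\<lambda>z. 0)"
        by blast
      define b where "b i z = a i (q * z) * (\<gamma> i * z ^ e i) * a i0 z - \<gamma> i0 * z ^ e i0 * a i0 (q * z) * a i z"
        for i z
      have b: "\<forall>i\<in>I. b i \<in> Mero \<and> rational_on_orbits q (b i)"
      proof
        fix i assume "i \<in> I"
        with less.prems(2) i0(1) show "b i \<in> Mero \<and> rational_on_orbits q (b i)"
          unfolding b_def by (intro q_combination_Mero_rational_on_orbits[OF q]) auto
      qed
      have rel_b: "countable {z. z \<noteq> 0 \<and> (\<Sum>i\<in>I. b i z * f i z) \<noteq> 0}"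
        unfolding b_def by (rule countable_eliminated_relation[OF \<open>q \<noteq> 0\<close> f_eq less.prems(3)])
      have "mero_eq (b i) (\<lambda>z. 0)" if "i \<in> I" "mero_eq (a i) (\<lambda>z. 0)" for i
        using countable_nonzero_q_combination[OF \<open>q \<noteq> 0\<close> mero_eq_imp_countable[OF that(2)],
                of "\<lambda>z. \<gamma> i * z ^ e i * a i0 z" "\<lambda>z. \<gamma> i0 * z ^ e i0 * a i0 (q * z)"] b that(1)
        by (simp add: mero_eq_0_iff_countable b_def mult.assoc)
      moreover have "mero_eq (b i0) (\<lambda>z. 0)"
        by (simp add: b_def mero_eq_def)
      ultimately have "{i\<in>I. \<not> mero_eq (b i) (\<lambda>z. 0)} \<subset> {i\<in>I. \<not> mero_eq (a i) (\<lambda>z. 0)}"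
        using i0 by blast
      hence "card {i\<in>I. \<not> mero_eq (b i) (\<lambda>z. 0)} < n"
        unfolding less.prems(1) using I by (intro psubset_card_mono) auto
      from less.IH[OF this refl b rel_b] have b_zero: "\<forall>i\<in>I. mero_eq (b i) (\<lambda>z. 0)" .
      have "mero_eq (a i) (\<lambda>z. 0)" if i: "i \<in> I - {i0}" for i
      proof (rule ccontr)
        assume "\<not> mero_eq (a i) (\<lambda>z. 0)"
        moreover have "countable {z. z \<noteq> 0 \<and> a i (q * z) * (\<gamma> i * z ^ e i) * a i0 z
                                         \<noteq> \<gamma> i0 * z ^ e i0 * a i0 (q * z) * a i z}"
          using mero_eq_imp_countable[of "b i" "\<lambda>z. 0"] b_zero i by (simp add: b_def)
        ultimately have "e i = e i0 \<and> (\<exists>k::int. \<gamma> i0 = \<gamma> i * q powi k)"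
          using rational_on_orbits_q_difference_pair[OF q, of "a i" "a i0" "\<gamma> i"] less.prems(2) \<gamma> i i0
          by auto
        with distinct i i0(1) show False
          by blast
      qed
      hence "countable {z. z \<noteq> 0 \<and> f i0 z \<noteq> 0}"
        using i0 less.prems(2,3) by (intro countable_if_other_coefficients_vanish[OF I]) auto
      with f_nonzero i0(1) show False
        by blast
    qed
  qed
qed

lemma q_eigenfunctions_independent_with_constant:
  fixes a f :: "'j \<Rightarrow> complex \<Rightarrow> complex" and \<gamma> :: "'j \<Rightarrow> complex" and e :: "'j \<Rightarrow> nat"
  assumes q: "norm q > 1" and J: "finite J"
    and \<gamma>_e: "\<forall>j\<in>J. \<gamma> j \<noteq> 0 \<and> e j > 0"
    and f_eq: "\<forall>j\<in>J. \<forall>z. z \<noteq> 0 \<longrightarrow> f j (q * z) = \<gamma> j * z ^ e j * f j z"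
    and f_nonzero: "\<forall>j\<in>J. \<not> countable {z. z \<noteq> 0 \<and> f j z \<noteq> 0}"
    and distinct: "\<forall>j\<in>J. \<forall>j'\<in>J. j \<noteq> j' \<longrightarrow> e j = e j' \<longrightarrow> (\<forall>k::int. \<gamma> j' \<noteq> \<gamma> j * q powi k)"
    and a0: "a0 \<in> Mero \<and> rational_on_orbits q a0"
    and a: "\<forall>j\<in>J. a j \<in> Mero \<and> rational_on_orbits q (a j)"
    and rel: "countable {z. z \<noteq> 0 \<and> a0 z + (\<Sum>j\<in>J. a j z * f j z) \<noteq> 0}"
  shows "mero_eq a0 (\<lambda>z. 0) \<and> (\<forall>j\<in>J. mero_eq (a j) (\<lambda>z. 0))"
proof -
  let ?I = "insert None (Some ` J)"
  have "\<not> countable {z::complex. z \<noteq> 0}"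
    by (metis (mono_tags) ex_nonzero_not_in_countable mem_Collect_eq)
  hence f_nonzero': "\<forall>i\<in>?I. \<not> countable {z. z \<noteq> 0 \<and> case_option (\<lambda>z. 1) f i z \<noteq> 0}"
    using f_nonzero by auto
  have "(\<Sum>i\<in>?I. case_option a0 a i z * case_option (\<lambda>z. 1) f i z) = a0 z + (\<Sum>j\<in>J. a j z * f j z)" for z
    using J by (simp add: sum.reindex)
  hence rel': "countable {z. z \<noteq> 0 \<and> (\<Sum>i\<in>?I. case_option a0 a i z * case_option (\<lambda>z. 1) f i z) \<noteq> 0}"
    using rel by simp
  have distinct': "\<forall>i\<in>?I. \<forall>i'\<in>?I. i \<noteq> i' \<longrightarrow> case_option 0 e i = case_option 0 e i' \<longrightarrow>
                     (\<forall>k::int. case_option 1 \<gamma> i' \<noteq> case_option 1 \<gamma> i * q powi k)"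
  proof (intro ballI impI)
    fix i i' assume "i \<in> ?I" "i' \<in> ?I" "i \<noteq> i'" "case_option 0 e i = case_option 0 e i'"
    thus "\<forall>k::int. case_option 1 \<gamma> i' \<noteq> case_option 1 \<gamma> i * q powi k"
      using distinct \<gamma>_e by (cases i; cases i') auto
  qed
  have "\<forall>i\<in>?I. mero_eq (case_option a0 a i) (\<lambda>z. 0)"
  proof (rule q_eigenfunctions_independent[OF q _ _ _ f_nonzero' distinct' _ rel'])
    show "finite ?I"
      using J by simp
    show "\<forall>i\<in>?I. case_option 1 \<gamma> i \<noteq> 0"
      using \<gamma>_e by auto
    show "\<forall>i\<in>?I. \<forall>z. z \<noteq> 0 \<longrightarrow>
            case_option (\<lambda>z. 1) f i (q * z) = case_option 1 \<gamma> i * z ^ case_option 0 e i * case_option (\<lambda>z. 1) f i z"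
      using f_eq by auto
    show "\<forall>i\<in>?I. case_option a0 a i \<in> Mero \<and> rational_on_orbits q (case_option a0 a i)"
      using a0 a by auto
  qed
  thus ?thesis
    by simp
qed

definition theta_term :: "complex \<Rightarrow> complex \<Rightarrow> int \<Rightarrow> complex" where
  "theta_term q w n = (-1) powi n * q powi (- (n * (n - 1) div 2)) * w powi n"

lemma theta_eq_infsum_theta_term: "theta q w = - (\<Sum>\<^sub>\<infinity>n. theta_term q w n)"
  by (simp add: theta_def theta_term_def)

lemma theta_term_dilate:
  assumes "q \<noteq> 0" "z \<noteq> 0"
  shows "theta_term q (q * z) (m + 1) = - (q * z) * theta_term q z m"
proof -
  define E where "E = - (m * (m - 1) div 2)"
  have "(m + 1) * m = m * (m - 1) + m * 2"
    by (simp add: algebra_simps)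
  hence exponent: "- ((m + 1) * (m + 1 - 1) div 2) = E - m"
    unfolding E_def by simp
  have "theta_term q (q * z) (m + 1) = (-1) powi (m + 1) * q powi (E - m) * (q * z) powi (m + 1)"
    unfolding theta_term_def exponent ..
  also have "\<dots> = ((-1) powi m * (-1)) * (q powi E / q powi m) * (q powi m * q * (z powi m * z))"
    using assms by (simp add: power_int_add power_int_diff power_int_mult_distrib)
  also have "\<dots> = - (q * z) * ((-1) powi m * q powi E * z powi m)"
    using assms by (simp add: field_simps)
  finally show ?thesis
    unfolding theta_term_def E_def .
qed

text \<open>The two sides may both be junk values of a non-summable series: the identity is proved by
  reindexing, which holds for infsum unconditionally.\<close>
lemma theta_functional_eq:
  assumes "q \<noteq> 0" "z \<noteq> 0"
  shows "theta q (q * z) = - q * z * theta q z"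
proof -
  have "bij_betw (\<lambda>m::int. m + 1) UNIV UNIV"
    by (rule bij_betwI[of _ _ _ "\<lambda>m. m - 1"]) auto
  hence "(\<Sum>\<^sub>\<infinity>n. theta_term q (q * z) n) = (\<Sum>\<^sub>\<infinity>m. theta_term q (q * z) (m + 1))"
    using infsum_reindex_bij_betw[of "\<lambda>m. m + 1" UNIV UNIV "theta_term q (q * z)"] by simp
  also have "\<dots> = (\<Sum>\<^sub>\<infinity>m. - (q * z) * theta_term q z m)"
    using theta_term_dilate[OF assms] by simp
  also have "\<dots> = - (q * z) * (\<Sum>\<^sub>\<infinity>n. theta_term q z n)"
    by (rule infsum_cmult_right')
  finally show ?thesis
    unfolding theta_eq_infsum_theta_term by simp
qed

lemma summable_power_triangular:
  fixes \<rho> s :: real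
  assumes "0 \<le> \<rho>" "\<rho> < 1" "0 \<le> s"
  shows "summable (\<lambda>n. \<rho> ^ (n * (n - 1) div 2) * s ^ n)"
proof -
  have "(\<lambda>n. \<rho> ^ n * s) \<longlonglongrightarrow> 0 * s"
    by (intro tendsto_intros) (use assms in auto)
  hence "\<forall>\<^sub>F n in sequentially. \<rho> ^ n * s < 1/2"
    by (intro order_tendstoD) auto
  then obtain N where N: "\<And>n. n \<ge> N \<Longrightarrow> \<rho> ^ n * s < 1/2"
    by (auto simp: eventually_sequentially)
  show ?thesis
  proof (rule summable_ratio_test[of "1/2" N])
    fix n assume "n \<ge> N"
    have "Suc n * n = n * (n - 1) + n * 2"
      by (cases n) (auto simp: algebra_simps)
    hence "Suc n * (Suc n - 1) div 2 = n * (n - 1) div 2 + n"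
      by simp
    hence "\<rho> ^ (Suc n * (Suc n - 1) div 2) * s ^ Suc n = (\<rho> ^ (n * (n - 1) div 2) * s ^ n) * (\<rho> ^ n * s)"
      by (simp only: power_add power_Suc mult_ac)
    also have "\<dots> \<le> (\<rho> ^ (n * (n - 1) div 2) * s ^ n) * (1/2)"
      using N[OF \<open>n \<ge> N\<close>] assms by (intro mult_left_mono) auto
    finally show "norm (\<rho> ^ (Suc n * (Suc n - 1) div 2) * s ^ Suc n)
        \<le> 1/2 * norm (\<rho> ^ (n * (n - 1) div 2) * s ^ n)"
      using assms by (simp add: mult_ac)
  qed auto
qed

text \<open>The parts of the Laurent series of theta with nonnegative and with negative exponents:
  theta q w = - (theta_plus q w + theta_minus q (1/w) / w).\<close>
definition theta_plus_coeff :: "complex \<Rightarrow> nat \<Rightarrow> complex" where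
  "theta_plus_coeff q n = (-1) ^ n / q ^ (n * (n - 1) div 2)"

definition theta_minus_coeff :: "complex \<Rightarrow> nat \<Rightarrow> complex" where
  "theta_minus_coeff q n = (-1) ^ (n + 1) / q ^ ((n + 1) * (n + 2) div 2)"

definition theta_plus :: "complex \<Rightarrow> complex \<Rightarrow> complex" where
  "theta_plus q w = (\<Sum>n. theta_plus_coeff q n * w ^ n)"

definition theta_minus :: "complex \<Rightarrow> complex \<Rightarrow> complex" where
  "theta_minus q w = (\<Sum>n. theta_minus_coeff q n * w ^ n)"

lemma summable_norm_theta_plus:
  assumes "norm q > 1"
  shows "summable (\<lambda>n. norm (theta_plus_coeff q n * w ^ n))"
proof -
  have "norm (theta_plus_coeff q n * w ^ n) = inverse (norm q) ^ (n * (n - 1) div 2) * norm w ^ n" for n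
    by (simp add: theta_plus_coeff_def norm_mult norm_divide norm_power norm_inverse power_inverse divide_inverse)
  moreover have "summable (\<lambda>n. inverse (norm q) ^ (n * (n - 1) div 2) * norm w ^ n)"
    by (rule summable_power_triangular) (use assms in \<open>auto simp: inverse_less_1_iff\<close>)
  ultimately show ?thesis
    by simp
qed

lemma summable_norm_theta_minus:
  assumes "norm q > 1"
  shows "summable (\<lambda>n. norm (theta_minus_coeff q n * w ^ n))"
proof (rule summable_comparison_test'[OF summable_power_triangular[of "inverse (norm q)" "norm w"]])
  show "0 \<le> inverse (norm q)" "inverse (norm q) < 1" "0 \<le> norm w"
    using assms by (auto simp: inverse_less_1_iff)
  fix n :: nat
  have "n * (n - 1) div 2 \<le> (n + 1) * (n + 2) div 2"
    by (intro div_le_mono mult_le_mono) auto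
  hence "inverse (norm q) ^ ((n + 1) * (n + 2) div 2) * norm w ^ n
      \<le> inverse (norm q) ^ (n * (n - 1) div 2) * norm w ^ n"
    using assms by (intro mult_right_mono power_decreasing) (auto simp: inverse_le_1_iff)
  thus "norm (norm (theta_minus_coeff q n * w ^ n)) \<le> inverse (norm q) ^ (n * (n - 1) div 2) * norm w ^ n"
    by (simp add: theta_minus_coeff_def norm_mult norm_divide norm_power norm_inverse power_inverse divide_inverse)
qed

lemma theta_term_nonneg: "theta_term q w (int n) = theta_plus_coeff q n * w ^ n"
proof -
  have "int n * (int n - 1) div 2 = int (n * (n - 1) div 2)"
    by (cases n) (simp_all add: zdiv_int algebra_simps)
  thus ?thesis
    by (simp add: theta_term_def theta_plus_coeff_def power_int_minus divide_inverse)
qed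

lemma theta_term_neg:
  assumes "w \<noteq> 0"
  shows "theta_term q w (- int n - 1) = theta_minus_coeff q n * (1 / w) ^ n / w"
proof -
  have "(- int (n + 1)) * (- int (n + 1) - 1) = int ((n + 1) * (n + 2))"
    by (simp add: algebra_simps)
  hence exponent: "(- int (n + 1)) * (- int (n + 1) - 1) div 2 = int ((n + 1) * (n + 2) div 2)"
    by (simp only: zdiv_int) simp
  have sign: "inverse ((-1::complex) ^ (n + 1)) = (-1) ^ (n + 1)"
    by (cases "even n") auto
  have "- int n - 1 = - int (n + 1)"
    by simp
  hence "theta_term q w (- int n - 1)
      = (-1) powi (- int (n + 1)) * q powi (- int ((n + 1) * (n + 2) div 2)) * w powi (- int (n + 1))"
    by (simp only: theta_term_def exponent)
  also have "\<dots> = (-1) ^ (n + 1) * inverse (q ^ ((n + 1) * (n + 2) div 2)) * inverse (w ^ (n + 1))"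
    by (simp only: power_int_minus power_int_of_nat sign)
  also have "\<dots> = theta_minus_coeff q n * (1 / w) ^ n / w"
    by (simp add: theta_minus_coeff_def divide_inverse power_one_over inverse_mult_distrib mult_ac power_inverse)
  finally show ?thesis .
qed

lemma has_sum_theta_term_nonneg:
  assumes "norm q > 1"
  shows "(theta_term q w has_sum theta_plus q w) (range int)"
proof -
  have "((\<lambda>n. theta_plus_coeff q n * w ^ n) has_sum theta_plus q w) UNIV"
    unfolding theta_plus_def using summable_norm_theta_plus[OF assms]
    by (intro norm_summable_imp_has_sum summable_sums[OF summable_norm_cancel])
  hence "(theta_term q w \<circ> int has_sum theta_plus q w) UNIV"
    by (simp add: o_def theta_term_nonneg)
  thus ?thesis
    by (simp add: has_sum_reindex)
qed

lemma has_sum_theta_term_neg: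
  assumes q: "norm q > 1" and "w \<noteq> 0"
  shows "(theta_term q w has_sum theta_minus q (1 / w) / w) (range (\<lambda>n::nat. - int n - 1))"
proof -
  have "summable (\<lambda>n. norm (theta_minus_coeff q n * (1 / w) ^ n / w))"
    using summable_divide[OF summable_norm_theta_minus[OF q, of "1 / w"], of "norm w"]
    by (simp add: norm_divide)
  moreover have "(\<lambda>n. theta_minus_coeff q n * (1 / w) ^ n / w) sums (theta_minus q (1 / w) / w)"
    unfolding theta_minus_def using summable_norm_theta_minus[OF q]
    by (intro sums_divide summable_sums[OF summable_norm_cancel])
  ultimately have "((\<lambda>n. theta_minus_coeff q n * (1 / w) ^ n / w) has_sum theta_minus q (1 / w) / w) UNIV"
    by (rule norm_summable_imp_has_sum)
  hence "(theta_term q w \<circ> (\<lambda>n::nat. - int n - 1) has_sum theta_minus q (1 / w) / w) UNIV"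
    using theta_term_neg[OF assms(2)] by (simp add: o_def)
  moreover have "inj (\<lambda>n::nat. - int n - 1)"
    by (rule injI) simp
  ultimately show ?thesis
    by (simp add: has_sum_reindex)
qed

lemma range_int_Un_negatives: "range int \<union> range (\<lambda>n::nat. - int n - 1) = UNIV"
proof -
  have "m \<in> range int \<union> range (\<lambda>n::nat. - int n - 1)" for m :: int
  proof (cases "m \<ge> 0")
    case True
    hence "m = int (nat m)"
      by simp
    thus ?thesis
      by blast
  next
    case False
    hence "m = - int (nat (- m - 1)) - 1"
      by simp
    thus ?thesis
      by blast
  qed
  thus ?thesis
    by blast
qed

lemma theta_split:
  assumes "norm q > 1" and "w \<noteq> 0"
  shows "theta q w = - (theta_plus q w + theta_minus q (1 / w) / w)"
proof -
  have "range int \<inter> range (\<lambda>n::nat. - int n - 1) = {}"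
    by auto
  from has_sum_Un_disjoint[OF has_sum_theta_term_nonneg[OF assms(1)] has_sum_theta_term_neg[OF assms] this]
  have "(theta_term q w has_sum theta_plus q w + theta_minus q (1 / w) / w) UNIV"
    by (simp add: range_int_Un_negatives)
  thus ?thesis
    unfolding theta_eq_infsum_theta_term by (simp add: infsumI)
qed

lemma power_series_holomorphic:
  fixes c :: "nat \<Rightarrow> complex"
  assumes "\<And>w. summable (\<lambda>n. norm (c n * w ^ n))"
  shows "(\<lambda>w. \<Sum>n. c n * w ^ n) holomorphic_on UNIV"
proof -
  have "((\<lambda>w. \<Sum>n. c n * w ^ n) has_field_derivative (\<Sum>n. diffs c n * w ^ n)) (at w)" for w
    by (rule termdiffs_strong_converges_everywhere) (rule summable_norm_cancel[OF assms])
  thus ?thesis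
    by (auto simp: holomorphic_on_def field_differentiable_def intro: has_field_derivative_at_within)
qed

lemma theta_plus_holomorphic: "norm q > 1 \<Longrightarrow> theta_plus q holomorphic_on UNIV"
  unfolding theta_plus_def[abs_def] by (intro power_series_holomorphic summable_norm_theta_plus)

lemma theta_minus_holomorphic: "norm q > 1 \<Longrightarrow> theta_minus q holomorphic_on UNIV"
  unfolding theta_minus_def[abs_def] by (intro power_series_holomorphic summable_norm_theta_minus)

lemma isCont_theta_plus: "norm q > 1 \<Longrightarrow> isCont (theta_plus q) w"
  using theta_plus_holomorphic
  by (metis UNIV_I continuous_on_eq_continuous_at holomorphic_on_imp_continuous_on open_UNIV)

lemma isCont_theta_minus: "norm q > 1 \<Longrightarrow> isCont (theta_minus q) w"
  using theta_minus_holomorphic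
  by (metis UNIV_I continuous_on_eq_continuous_at holomorphic_on_imp_continuous_on open_UNIV)

lemma isCont_zero_if_zero_off_countable:
  fixes f :: "complex \<Rightarrow> complex"
  assumes "isCont f w" "countable {z. f z \<noteq> 0}"
  shows "f w = 0"
proof (rule ccontr)
  assume "f w \<noteq> 0"
  then obtain e where "e > 0" "\<forall>y. dist w y < e \<longrightarrow> f y \<noteq> 0"
    using continuous_at_avoid[OF assms(1)] by blast
  hence "ball w e \<subseteq> {z. f z \<noteq> 0}"
    by auto
  from countable_subset[OF this assms(2)] uncountable_ball[OF \<open>e > 0\<close>] show False
    by blast
qed

lemma theta_halves_cancel_if_countable:
  assumes q: "norm q > 1" and "countable {w. w \<noteq> 0 \<and> theta q w \<noteq> 0}" and "w \<noteq> 0"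
  shows "theta_plus q w + theta_minus q (1 / w) / w = 0"
proof (rule isCont_zero_if_zero_off_countable[where f = "\<lambda>w. theta_plus q w + theta_minus q (1 / w) / w"])
  show "isCont (\<lambda>w. theta_plus q w + theta_minus q (1 / w) / w) w"
    using \<open>w \<noteq> 0\<close> isCont_theta_plus[OF q] isCont_theta_minus[OF q]
    by (auto intro!: continuous_intros isCont_o2[where f = "\<lambda>w. 1 / w" and g = "theta_minus q"])
  have "{w. theta_plus q w + theta_minus q (1 / w) / w \<noteq> 0} \<subseteq> insert 0 {w. w \<noteq> 0 \<and> theta q w \<noteq> 0}"
  proof
    fix w assume "w \<in> {w. theta_plus q w + theta_minus q (1 / w) / w \<noteq> 0}"
    thus "w \<in> insert 0 {w. w \<noteq> 0 \<and> theta q w \<noteq> 0}"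
      by (cases "w = 0") (simp_all add: theta_split[OF q] neg_eq_iff_add_eq_0)
  qed
  thus "countable {w. theta_plus q w + theta_minus q (1 / w) / w \<noteq> 0}"
    by (rule countable_subset) (use assms(2) in simp)
qed

lemma theta_plus_bounded_if_countable:
  assumes q: "norm q > 1" and "countable {w. w \<noteq> 0 \<and> theta q w \<noteq> 0}"
  shows "bounded (range (theta_plus q))"
proof -
  note cancel = theta_halves_cancel_if_countable[OF assms]
  have "continuous_on (cball 0 1) (theta_plus q)" "continuous_on (cball 0 1) (theta_minus q)"
    using theta_plus_holomorphic[OF q] theta_minus_holomorphic[OF q]
    by (auto intro: holomorphic_on_imp_continuous_on holomorphic_on_subset)
  hence "compact (theta_plus q ` cball 0 1)" "compact (theta_minus q ` cball 0 1)"
    by (auto intro: compact_continuous_image)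
  then obtain M1 M2 where "\<forall>x\<in>theta_plus q ` cball 0 1. norm x \<le> M1"
                      and "\<forall>x\<in>theta_minus q ` cball 0 1. norm x \<le> M2"
    by (meson bounded_iff compact_imp_bounded)
  hence M1: "\<And>w. norm w \<le> 1 \<Longrightarrow> norm (theta_plus q w) \<le> M1"
    and M2: "\<And>w. norm w \<le> 1 \<Longrightarrow> norm (theta_minus q w) \<le> M2"
    by auto
  have "norm (theta_plus q w) \<le> max M1 M2" for w
  proof (cases "norm w \<le> 1")
    case False
    hence "w \<noteq> 0"
      by auto
    hence "theta_plus q w = - (theta_minus q (1 / w) / w)"
      using cancel by (simp add: eq_neg_iff_add_eq_0)
    hence "norm (theta_plus q w) = norm (theta_minus q (1 / w)) / norm w"
      by (simp add: norm_divide)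
    also have "\<dots> \<le> norm (theta_minus q (1 / w))"
      using False by (simp add: divide_le_eq mult_le_cancel_left1)
    also have "\<dots> \<le> M2"
      using False by (intro M2) (simp add: norm_divide divide_le_eq)
    finally show ?thesis
      by simp
  qed (use M1 in force)
  thus ?thesis
    by (auto simp: bounded_iff)
qed

text \<open>Otherwise Liouville makes theta_plus constant 1, so u * theta_minus q u = -1 for all u \<noteq> 0,
  contradicting continuity of theta_minus at 0.\<close>
lemma theta_not_countably_zero:
  assumes q: "norm q > 1"
  shows "\<not> countable {w. w \<noteq> 0 \<and> theta q w \<noteq> 0}"
proof
  assume countable: "countable {w. w \<noteq> 0 \<and> theta q w \<noteq> 0}"
  obtain c where "\<And>w. theta_plus q w = c"
    using Liouville_theorem[OF theta_plus_holomorphic[OF q] theta_plus_bounded_if_countable[OF q countable]]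
    unfolding constant_on_def by blast
  moreover have "theta_plus q 0 = 1"
    unfolding theta_plus_def using powser_zero[of "theta_plus_coeff q"] by (simp add: theta_plus_coeff_def)
  ultimately have plus_1: "theta_plus q w = 1" for w
    by metis
  have "u * theta_minus q u = -1" if "u \<noteq> 0" for u
    using theta_halves_cancel_if_countable[OF q countable, of "1 / u"] that
    by (simp add: plus_1 add_eq_0_iff mult.commute)
  hence eventually_minus_1: "\<forall>\<^sub>F u in at 0. u * theta_minus q u = -1"
    by (auto simp: eventually_at_filter)
  have "isCont (\<lambda>u. u * theta_minus q u) 0"
    by (intro continuous_intros isCont_theta_minus q)
  hence "(\<lambda>u. u * theta_minus q u) \<midarrow>0\<rightarrow> 0"
    by (simp add: isCont_def)
  hence "(\<lambda>u::complex. -1 :: complex) \<midarrow>0\<rightarrow> 0"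
    using eventually_minus_1 by (rule Lim_transform_eventually)
  from LIM_const_eq[OF this] show False
    by simp
qed

lemma theta_power_dilate:
  assumes "q \<noteq> 0" "c \<noteq> 0" "z \<noteq> 0"
  shows "theta q (c * (q * z)) ^ d = (- q * c) ^ d * z ^ d * theta q (c * z) ^ d"
proof -
  have "theta q (c * (q * z)) = (- q * c) * z * theta q (c * z)"
    using theta_functional_eq[of q "c * z"] assms by (simp add: mult_ac)
  thus ?thesis
    by (simp only: power_mult_distrib)
qed

lemma theta_power_not_countably_zero:
  assumes "norm q > 1" "c \<noteq> 0"
  shows "\<not> countable {z. z \<noteq> 0 \<and> theta q (c * z) ^ d \<noteq> 0}"
proof
  assume "countable {z. z \<noteq> 0 \<and> theta q (c * z) ^ d \<noteq> 0}"
  hence "countable ((\<lambda>z. c * z) ` {z. z \<noteq> 0 \<and> theta q (c * z) ^ d \<noteq> 0})"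
    by simp
  moreover have "{w. w \<noteq> 0 \<and> theta q w \<noteq> 0} \<subseteq> (\<lambda>z. c * z) ` {z. z \<noteq> 0 \<and> theta q (c * z) ^ d \<noteq> 0}"
  proof
    fix w assume "w \<in> {w. w \<noteq> 0 \<and> theta q w \<noteq> 0}"
    with assms(2) show "w \<in> (\<lambda>z. c * z) ` {z. z \<noteq> 0 \<and> theta q (c * z) ^ d \<noteq> 0}"
      by (intro image_eqI[of _ _ "w / c"]) auto
  qed
  ultimately have "countable {w. w \<noteq> 0 \<and> theta q w \<noteq> 0}"
    by (rule countable_subset[rotated])
  with theta_not_countably_zero[OF assms(1)] show False
    by blast
qed

lemma primitive_root_pow_eq_1_imp_dvd:
  fixes \<zeta> :: complex
  assumes "t > 0" "\<forall>k. 0 < k \<and> k < t \<longrightarrow> \<zeta> ^ k \<noteq> 1" "\<zeta> ^ t = 1" "\<zeta> ^ m = 1"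
  shows "t dvd m"
proof -
  have "\<zeta> ^ m = \<zeta> ^ (t * (m div t) + m mod t)"
    by simp
  also have "\<dots> = (\<zeta> ^ t) ^ (m div t) * \<zeta> ^ (m mod t)"
    by (simp only: power_add power_mult)
  finally have "\<zeta> ^ (m mod t) = 1"
    using assms(3,4) by simp
  moreover have "m mod t < t"
    using assms(1) by simp
  ultimately have "m mod t = 0"
    using assms(2)[rule_format, of "m mod t"] by auto
  thus ?thesis
    by (simp add: dvd_eq_mod_eq_0)
qed

lemma primitive_root_pow_mult_inj:
  fixes \<zeta> :: complex
  assumes t: "prime t" "\<zeta> ^ t = 1" "\<forall>k. 0 < k \<and> k < t \<longrightarrow> \<zeta> ^ k \<noteq> 1"
    and "0 < d" "d < t" "j < t" "j' < t" "\<zeta> ^ (j * d) = \<zeta> ^ (j' * d)"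
  shows "j = j'"
proof -
  have "t > 0"
    using t(1) prime_gt_0_nat by blast
  hence "\<zeta> \<noteq> 0"
    using t(2) by (auto simp: power_0_left)
  have ordered: "a = b" if "a \<le> b" "b < t" "\<zeta> ^ (a * d) = \<zeta> ^ (b * d)" for a b
  proof -
    have "(b - a) * d + a * d = b * d"
      using that(1) by (simp add: diff_mult_distrib)
    hence "\<zeta> ^ ((b - a) * d) * \<zeta> ^ (a * d) = \<zeta> ^ (b * d)"
      by (simp only: power_add[symmetric])
    hence "\<zeta> ^ ((b - a) * d) = 1"
      using that(3) \<open>\<zeta> \<noteq> 0\<close> by simp
    hence "t dvd (b - a) * d"
      by (rule primitive_root_pow_eq_1_imp_dvd[OF \<open>t > 0\<close> t(3,2)])
    moreover have "\<not> t dvd d"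
      using assms(4,5) by (auto dest: dvd_imp_le)
    ultimately have "t dvd b - a"
      using t(1) by (simp add: prime_dvd_mult_iff)
    moreover have "b - a < t"
      using that(2) by linarith
    ultimately have "b - a = 0"
      by (cases "b - a = 0") (auto dest: dvd_imp_le)
    with that(1) show "a = b"
      by simp
  qed
  show ?thesis
  proof (cases "j \<le> j'")
    case True
    with ordered assms(7,8) show ?thesis
      by blast
  next
    case False
    with ordered[of j' j] assms(6,8) show ?thesis
      by simp
  qed
qed

lemma theta_multipliers_distinct:
  fixes q \<zeta> :: complex
  assumes q: "norm q > 1" and t: "prime t" "\<zeta> ^ t = 1" "\<forall>k. 0 < k \<and> k < t \<longrightarrow> \<zeta> ^ k \<noteq> 1"
    and "j < t" "j' < t" "j \<noteq> j'" "0 < d" "d < t"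
  shows "(- q * \<zeta> ^ j') ^ d \<noteq> (- q * \<zeta> ^ j) ^ d * q powi k"
proof
  assume eq: "(- q * \<zeta> ^ j') ^ d = (- q * \<zeta> ^ j) ^ d * q powi k"
  have "q \<noteq> 0"
    using q by auto
  have "norm \<zeta> = 1"
    using power_eq_1_iff[OF t(2)] prime_gt_0_nat[OF t(1)] by auto
  hence "norm ((- q * \<zeta> ^ j') ^ d) = norm q ^ d" "norm ((- q * \<zeta> ^ j) ^ d) = norm q ^ d"
    by (simp_all add: norm_mult norm_power)
  with eq have "norm q ^ d = norm q ^ d * norm q powi k"
    by (metis norm_mult norm_power_int)
  hence "norm q powi k = 1"
    using \<open>q \<noteq> 0\<close> by simp
  hence "k = 0"
    using power_int_strict_increasing[of k 0 "norm q"] power_int_strict_increasing[of 0 k "norm q"] q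
    by (cases k "0::int" rule: linorder_cases) auto
  with eq have "(- q * \<zeta> ^ j') ^ d = (- q * \<zeta> ^ j) ^ d"
    by simp
  hence "(- q) ^ d * (\<zeta> ^ j') ^ d = (- q) ^ d * (\<zeta> ^ j) ^ d"
    by (simp only: power_mult_distrib)
  hence "(\<zeta> ^ j) ^ d = (\<zeta> ^ j') ^ d"
    using \<open>q \<noteq> 0\<close> by simp
  hence "\<zeta> ^ (j * d) = \<zeta> ^ (j' * d)"
    by (simp add: power_mult)
  with primitive_root_pow_mult_inj[OF t assms(8,9,5,6)] assms(7) show False
    by blast
qed

theorem theorem6:
  fixes q \<zeta> :: complex and t :: nat
    and lam0 :: "complex \<Rightarrow> complex" and lam :: "nat \<Rightarrow> nat \<Rightarrow> complex \<Rightarrow> complex"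
  assumes "norm q > 1"
    and "prime t"
    and "\<zeta> ^ t = 1" and "\<forall>k. 0 < k \<and> k < t \<longrightarrow> \<zeta> ^ k \<noteq> 1"
    and "lam0 \<in> kappa_z q"
    and "\<forall>j<t. \<forall>d\<in>{1..t-1}. lam j d \<in> kappa_z q"
    and "mero_eq (\<lambda>z. lam0 z + (\<Sum>d=1..t-1. \<Sum>j<t. lam j d z * theta q (\<zeta> ^ j * z) ^ d)) (\<lambda>z. 0)"
  shows "mero_eq lam0 (\<lambda>z. 0) \<and> (\<forall>j<t. \<forall>d\<in>{1..t-1}. mero_eq (lam j d) (\<lambda>z. 0))"
proof -
  have "q \<noteq> 0" "\<zeta> \<noteq> 0"
    using assms(1,3) prime_gt_0_nat[OF assms(2)] by (auto simp: power_0_left)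
  define J where "J = {..<t} \<times> {1..t-1}"
  have "(\<Sum>p\<in>J. lam (fst p) (snd p) z * theta q (\<zeta> ^ fst p * z) ^ snd p)
      = (\<Sum>d=1..t-1. \<Sum>j<t. lam j d z * theta q (\<zeta> ^ j * z) ^ d)" for z
    unfolding J_def by (subst sum.swap) (simp add: sum.cartesian_product case_prod_beta)
  hence "countable {z. z \<noteq> 0 \<and> lam0 z + (\<Sum>p\<in>J. lam (fst p) (snd p) z * theta q (\<zeta> ^ fst p * z) ^ snd p) \<noteq> 0}"
    using mero_eq_imp_countable[OF assms(7)] by simp
  hence "mero_eq lam0 (\<lambda>z. 0) \<and> (\<forall>p\<in>J. mero_eq (lam (fst p) (snd p)) (\<lambda>z. 0))"
  proof (rule q_eigenfunctions_independent_with_constant[OF assms(1), where \<gamma> = "\<lambda>p. (- q * \<zeta> ^ fst p) ^ snd p"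
                                                                    and e = snd, rotated -1])
    show "\<forall>p\<in>J. \<forall>p'\<in>J. p \<noteq> p' \<longrightarrow> snd p = snd p' \<longrightarrow>
            (\<forall>k::int. (- q * \<zeta> ^ fst p') ^ snd p' \<noteq> (- q * \<zeta> ^ fst p) ^ snd p * q powi k)"
      using theta_multipliers_distinct[OF assms(1-4)] by (auto simp: J_def prod_eq_iff)
    show "\<forall>p\<in>J. \<not> countable {z. z \<noteq> 0 \<and> theta q (\<zeta> ^ fst p * z) ^ snd p \<noteq> 0}"
      using \<open>\<zeta> \<noteq> 0\<close> by (intro ballI theta_power_not_countably_zero[OF assms(1)]) simp
  qed (use \<open>q \<noteq> 0\<close> \<open>\<zeta> \<noteq> 0\<close> assms(1,5,6) in
       \<open>auto simp: J_def theta_power_dilate kappa_z_imp_Mero_rational_on_orbits\<close>)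
  thus ?thesis
    by (auto simp: J_def)
qed

end
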